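(* Let $P$ be a finite lattice with bottom element $\perp$. Restriction $R\mapsto R|_{P\setminus\{\perp\}}$ is a bijection from the set of transfer systems $R$ on $P$ satisfying $\perp\,R\,a$ for all $a\in P$ onto the set of transfer systems on the poset $P\setminus\{\perp\}$; its inverse sends a transfer system $Q$ on $P\setminus\{\perp\}$ to $Q$ together with all relations $\perp\,\tilde Q\,a$, $a\in P$.
   Context: A transfer system on a finite lattice $(P,\le)$ is a partial order $R$ refining $\le$ closed under restriction: $x\,R\,z$ and $y\le z$ imply $(x\wedge y)\,R\,y$. For a finite poset $(S,\le)$ (not necessarily a lattice), a transfer system on $S$ is a partial order $R$ on $S$ refining $\le$ such that whenever $x\,R\,y$ and $z\le y$, then $w\,R\,z$ for every $w$ that is maximal among common lower bounds of $x$ and $z$ (vacuous if there is none); when $x\wedge z$ exists this agrees with the lattice definition. *)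

theory Defs
  imports Main
begin

definition transfer_system_lattice :: "('a::lattice) rel \<Rightarrow> bool" where
  "transfer_system_lattice R \<longleftrightarrow>
     R \<subseteq> {(x, y). x \<le> y} \<and>
     (\<forall>x. (x, x) \<in> R) \<and> antisym R \<and> trans R \<and>
     (\<forall>x y z. (x, z) \<in> R \<longrightarrow> y \<le> z \<longrightarrow> (inf x y, y) \<in> R)"

definition max_common_lower :: "('a::order) set \<Rightarrow> 'a \<Rightarrow> 'a \<Rightarrow> 'a set" where
  "max_common_lower S x z =
     {w \<in> S. w \<le> x \<and> w \<le> z \<and> \<not> (\<exists>v \<in> S. v \<le> x \<and> v \<le> z \<and> w < v)}"

definition transfer_system_on :: "('a::order) set \<Rightarrow> 'a rel \<Rightarrow> bool" where
  "transfer_system_on S R \<longleftrightarrow>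
     R \<subseteq> {(x, y). x \<in> S \<and> y \<in> S \<and> x \<le> y} \<and>
     (\<forall>x \<in> S. (x, x) \<in> R) \<and> antisym R \<and> trans R \<and>
     (\<forall>x y z w. (x, y) \<in> R \<longrightarrow> z \<in> S \<longrightarrow> z \<le> y \<longrightarrow>
        w \<in> max_common_lower S x z \<longrightarrow> (w, z) \<in> R)"

end

theory Submission
  imports Defs
begin

text \<open>Removing the bottom of a lattice leaves a poset in which two elements have a maximal
  common lower bound exactly when their meet is not the bottom, and then it is unique and
  equal to the meet. So the restriction axiom on the punctured poset is the lattice
  restriction axiom with every relation ending in the bottom discarded; since the bottom
  transfers to everything anyway, nothing is lost by forgetting those relations.\<close>

lemma max_common_lower_punctured:
  fixes x z :: "'a::bounded_lattice_bot"
  shows "max_common_lower (UNIV - {bot}) x z = (if inf x z = bot then {} else {inf x z})"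
proof -
  have "w = inf x z \<and> inf x z \<noteq> bot" if "w \<in> max_common_lower (UNIV - {bot}) x z" for w
  proof -
    from that have "w \<le> inf x z" "w \<noteq> bot"
      and "\<And>v. v \<noteq> bot \<Longrightarrow> v \<le> x \<Longrightarrow> v \<le> z \<Longrightarrow> \<not> w < v"
      unfolding max_common_lower_def by auto
    then show ?thesis
      by (metis bot_unique inf_le1 inf_le2 order_less_le)
  qed
  moreover have "inf x z \<in> max_common_lower (UNIV - {bot}) x z" if "inf x z \<noteq> bot"
    using that unfolding max_common_lower_def by (auto simp: less_le_not_le intro: order.antisym)
  ultimately show ?thesis by auto
qed

lemma transfer_system_lattice_extend_bot:
  fixes Q :: "('a::bounded_lattice_bot) rel"
  assumes "transfer_system_on (UNIV - {bot}) Q"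
  shows "transfer_system_lattice (Q \<union> {(bot, a) | a. True})"
proof -
  let ?S = "(UNIV :: 'a set) - {bot}"
  let ?E = "Q \<union> {(bot, a) | a. True}"
  have sub: "Q \<subseteq> {(x, y). x \<in> ?S \<and> y \<in> ?S \<and> x \<le> y}"
    and refl: "\<forall>x \<in> ?S. (x, x) \<in> Q" and anti: "antisym Q" and tr: "trans Q"
    and res: "\<And>x y z w. (x, y) \<in> Q \<Longrightarrow> z \<in> ?S \<Longrightarrow> z \<le> y \<Longrightarrow>
                w \<in> max_common_lower ?S x z \<Longrightarrow> (w, z) \<in> Q"
    using assms unfolding transfer_system_on_def by blast+
  have "trans ?E"
  proof (rule transI)
    fix x y z assume xy: "(x, y) \<in> ?E" and yz: "(y, z) \<in> ?E"
    show "(x, z) \<in> ?E"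
    proof (cases "x = bot")
      case False
      with xy sub have "(x, y) \<in> Q" "y \<noteq> bot" by auto
      with yz have "(y, z) \<in> Q" by blast
      with \<open>(x, y) \<in> Q\<close> have "(x, z) \<in> Q" using tr by (meson transD)
      then show ?thesis by blast
    qed simp
  qed
  moreover have "(inf x y, y) \<in> ?E" if xz: "(x, z) \<in> ?E" and "y \<le> z" for x y z
  proof (cases "inf x y = bot")
    case False
    then have "x \<noteq> bot" "y \<noteq> bot" by auto
    with xz have "(x, z) \<in> Q" by blast
    moreover have "inf x y \<in> max_common_lower ?S x y"
      using False by (simp add: max_common_lower_punctured)
    ultimately have "(inf x y, y) \<in> Q"
      using res \<open>y \<noteq> bot\<close> \<open>y \<le> z\<close> by blast
    then show ?thesis by blast
  qed simp
  moreover have "antisym ?E"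
    using anti sub by (auto simp: antisym_def)
  moreover have "?E \<subseteq> {(x, y). x \<le> y}" "\<forall>x. (x, x) \<in> ?E"
    using sub refl by auto
  ultimately show ?thesis
    unfolding transfer_system_lattice_def by blast
qed

lemma transfer_system_on_restrict_punctured:
  fixes R :: "('a::bounded_lattice_bot) rel"
  assumes "transfer_system_lattice R"
  shows "transfer_system_on (UNIV - {bot}) (R \<inter> ((UNIV - {bot}) \<times> (UNIV - {bot})))"
proof -
  let ?S = "(UNIV :: 'a set) - {bot}"
  let ?Q = "R \<inter> (?S \<times> ?S)"
  have sub: "R \<subseteq> {(x, y). x \<le> y}" and refl: "\<forall>x. (x, x) \<in> R" and anti: "antisym R"
    and tr: "trans R" and res: "\<And>x y z. (x, z) \<in> R \<Longrightarrow> y \<le> z \<Longrightarrow> (inf x y, y) \<in> R"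
    using assms unfolding transfer_system_lattice_def by blast+
  have "(w, z) \<in> ?Q"
    if "(x, y) \<in> ?Q" "z \<in> ?S" "z \<le> y" "w \<in> max_common_lower ?S x z" for x y z w
  proof -
    from that(4) have "w = inf x z" "w \<in> ?S"
      by (auto simp: max_common_lower_punctured split: if_splits)
    moreover have "(inf x z, z) \<in> R"
      using that(1,3) res by blast
    ultimately show ?thesis
      using that(2) by blast
  qed
  moreover have "antisym ?Q"
    using anti by (rule antisym_subset[rotated]) blast
  moreover have "trans ?Q"
    using tr by (rule trans_Restr)
  moreover have "?Q \<subseteq> {(x, y). x \<in> ?S \<and> y \<in> ?S \<and> x \<le> y}" "\<forall>x \<in> ?S. (x, x) \<in> ?Q"
    using sub refl by auto
  ultimately show ?thesis
    unfolding transfer_system_on_def by blast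
qed

lemma extend_bot_restrict_punctured:
  fixes R :: "('a::order_bot) rel"
  assumes "R \<subseteq> {(x, y). x \<le> y}" and "\<forall>a. (bot, a) \<in> R"
  shows "R \<inter> ((UNIV - {bot}) \<times> (UNIV - {bot})) \<union> {(bot, a) | a. True} = R"
  using assms by (auto simp: bot_unique)

theorem lemma4p8:
  fixes dummy :: "'a::{finite, bounded_lattice_bot}"
  defines "S \<equiv> (UNIV :: 'a set) - {bot}"
  defines "restr \<equiv> (\<lambda>R :: 'a rel. R \<inter> (S \<times> S))"
  defines "ext \<equiv> (\<lambda>Q :: 'a rel. Q \<union> {(bot, a) | a. True})"
  shows "bij_betw restr {R. transfer_system_lattice R \<and> (\<forall>a. (bot, a) \<in> R)}
                        {Q. transfer_system_on S Q}
       \<and> (\<forall>Q. transfer_system_on S Q \<longrightarrow>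
              transfer_system_lattice (ext Q) \<and> (\<forall>a. (bot, a) \<in> ext Q) \<and> restr (ext Q) = Q)
       \<and> (\<forall>R. transfer_system_lattice R \<and> (\<forall>a. (bot, a) \<in> R) \<longrightarrow> ext (restr R) = R)"
proof -
  have ext: "transfer_system_lattice (ext Q) \<and> (\<forall>a. (bot, a) \<in> ext Q) \<and> restr (ext Q) = Q"
    if "transfer_system_on S Q" for Q
  proof -
    from that have "Q \<subseteq> S \<times> S"
      unfolding transfer_system_on_def by blast
    with that show ?thesis
      using transfer_system_lattice_extend_bot[of Q]
      unfolding S_def restr_def ext_def by blast
  qed
  have restr: "ext (restr R) = R"
    if "transfer_system_lattice R" "\<forall>a. (bot, a) \<in> R" for R
    using that extend_bot_restrict_punctured[of R]
    unfolding transfer_system_lattice_def S_def restr_def ext_def by blast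
  have "bij_betw restr {R. transfer_system_lattice R \<and> (\<forall>a. (bot, a) \<in> R)}
                       {Q. transfer_system_on S Q}"
    by (rule bij_betw_byWitness[where f' = ext])
      (use ext restr transfer_system_on_restrict_punctured in \<open>auto simp: S_def restr_def\<close>)
  with ext restr show ?thesis by blast
qed

end
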